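(* Let $n\ge 4$ and $t\in[n-1]$ be integers, and let $S$ be a weak $(2n-2t-1)$-resolving set of $K_n\times K_n$, with $\overline S=V\setminus S$. For all distinct $i,i'\in[n]$: if there is some $j\in[n]$ with $(i,j)\in\overline S$ and $(i',j)\in\overline S$, then $|(L_i\cup L_{i'})\cap\overline S|\le 2t+1$; otherwise $|(L_i\cup L_{i'})\cap\overline S|\le 2t+2$.
   Context: $K_n\times K_n$ is the direct product of two complete graphs on $n$ vertices: vertex set $V=[n]\times[n]$ with $[n]=\{1,\dots,n\}$, and $(i,j)$ adjacent to $(i',j')$ iff $i\ne i'$ and $j\ne j'$. For $i\in[n]$, $L_i=\{(i,j):j\in[n]\}$ is a vertical layer. For vertices $x,y,z$ and $S\subseteq V$, $\Delta_z(x,y)=|d(x,z)-d(y,z)|$ (with $d$ the graph distance) and $\Delta_S(x,y)=\sum_{z\in S}\Delta_z(x,y)$. A set $S$ is a weak $k$-resolving set if $\Delta_S(x,y)\ge k$ for all distinct $x,y\in V$. *)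

theory Defs
  imports Main
begin

definition V :: "nat \<Rightarrow> (nat \<times> nat) set" where
  "V n = {1..n} \<times> {1..n}"

definition adj :: "nat \<Rightarrow> nat \<times> nat \<Rightarrow> nat \<times> nat \<Rightarrow> bool" where
  "adj n x y \<longleftrightarrow> x \<in> V n \<and> y \<in> V n \<and> fst x \<noteq> fst y \<and> snd x \<noteq> snd y"

inductive walk :: "nat \<Rightarrow> nat \<Rightarrow> nat \<times> nat \<Rightarrow> nat \<times> nat \<Rightarrow> bool" for n where
  walk0: "x \<in> V n \<Longrightarrow> walk n 0 x x"
| walkS: "adj n x y \<Longrightarrow> walk n k y z \<Longrightarrow> walk n (Suc k) x z"

text \<open>Graph distance (the graph is connected for n >= 3).\<close>
definition dist :: "nat \<Rightarrow> nat \<times> nat \<Rightarrow> nat \<times> nat \<Rightarrow> nat" where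
  "dist n x y = (LEAST k. walk n k x y)"

definition Delta :: "nat \<Rightarrow> nat \<times> nat \<Rightarrow> nat \<times> nat \<Rightarrow> nat \<times> nat \<Rightarrow> nat" where
  "Delta n z x y = nat \<bar>int (dist n x z) - int (dist n y z)\<bar>"

definition DeltaS :: "nat \<Rightarrow> (nat \<times> nat) set \<Rightarrow> nat \<times> nat \<Rightarrow> nat \<times> nat \<Rightarrow> nat" where
  "DeltaS n S x y = (\<Sum>z\<in>S. Delta n z x y)"

definition weak_k_resolving :: "nat \<Rightarrow> nat \<Rightarrow> (nat \<times> nat) set \<Rightarrow> bool" where
  "weak_k_resolving n k S \<longleftrightarrow> S \<subseteq> V n \<and>
     (\<forall>x\<in>V n. \<forall>y\<in>V n. x \<noteq> y \<longrightarrow> DeltaS n S x y \<ge> k)"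

definition layer :: "nat \<Rightarrow> nat \<Rightarrow> (nat \<times> nat) set" where
  "layer n i = {(i, j) | j. j \<in> {1..n}}"

end

theory Submission
  imports Defs
begin

text \<open>For n \<ge> 3 the graph has diameter 2: the distance from x to z is 0, 1 or 2 according
  as z is x, a neighbour of x, or neither. So for x = (i,j) and y = (i',j) in a common column,
  d(x,z) and d(y,z) differ by 1 for every other z in the layers L_i, L_i' and by 2 for
  z \<in> {x, y}, and agree elsewhere. Hence Delta_S(x,y) is |S \<inter> (L_i \<union> L_i')| plus the
  number of x, y lying in S. Since |L_i \<union> L_i'| = 2n, the weak (2n-2t-1)-resolving condition
  leaves at most 2t+1 vertices of L_i \<union> L_i' outside S when some column has both x, y
  outside S, and at most 2t+2 otherwise, using the column of any vertex outside S.\<close>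

lemma walk_0_eq: "walk n 0 x y \<Longrightarrow> x = y"
  by (erule walk.cases) auto

lemma walk_1_adj: "walk n (Suc 0) x y \<Longrightarrow> adj n x y"
  by (erule walk.cases) (auto dest: walk_0_eq)

lemma exists_avoiding_two: "\<exists>e::nat. e \<in> {1..3} \<and> e \<noteq> a \<and> e \<noteq> c"
  by (rule exI[of _ "if 1 \<notin> {a, c} then 1 else if 2 \<notin> {a, c} then 2 else 3"]) auto

lemma common_neighbour:
  assumes "n \<ge> 3" and "x \<in> V n" and "z \<in> V n"
  obtains w where "adj n x w" and "adj n w z"
proof -
  obtain e where e: "e \<in> {1..3}" "e \<noteq> fst x" "e \<noteq> fst z"
    using exists_avoiding_two by blast
  obtain f where f: "f \<in> {1..3}" "f \<noteq> snd x" "f \<noteq> snd z"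
    using exists_avoiding_two by blast
  have "(e, f) \<in> V n"
    using e f assms(1) by (auto simp: V_def)
  with assms e f have "adj n x (e, f)" and "adj n (e, f) z"
    by (auto simp: adj_def)
  then show thesis by (rule that)
qed

lemma dist_eq:
  assumes "n \<ge> 3" and "x \<in> V n" and "z \<in> V n"
  shows "dist n x z = (if x = z then 0 else if adj n x z then 1 else 2)"
proof -
  have "walk n 0 z z" using assms(3) by (rule walk0)
  have walk_adj: "walk n (Suc 0) x z" if "adj n x z"
    by (rule walkS[OF that \<open>walk n 0 z z\<close>])
  obtain w where "adj n x w" and "adj n w z"
    using common_neighbour assms by blast
  with \<open>walk n 0 z z\<close> have walk_2: "walk n 2 x z"
    unfolding numeral_2_eq_2 by (blast intro: walkS)
  have no_short_walk: "\<not> walk n k x z" if "k < (if x = z then 0 else if adj n x z then 1 else 2)" for k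
    using that by (auto simp: less_Suc_eq numeral_2_eq_2 dest: walk_0_eq walk_1_adj split: if_splits)
  show ?thesis
    unfolding dist_def
  proof (rule Least_equality)
    show "walk n (if x = z then 0 else if adj n x z then 1 else 2) x z"
      using walk0[OF assms(2)] walk_adj walk_2 by auto
  qed (use no_short_walk not_le in blast)
qed

lemma Delta_same_column:
  assumes "n \<ge> 3" and "(i, j) \<in> V n" and "(i', j) \<in> V n" and "i \<noteq> i'" and "z \<in> V n"
  shows "Delta n z (i, j) (i', j) =
    of_bool (z \<in> layer n i \<union> layer n i') + of_bool (z = (i, j)) + of_bool (z = (i', j))"
  using dist_eq[OF assms(1,2,5)] dist_eq[OF assms(1,3,5)] assms(2-5)
  by (cases z) (auto simp: Delta_def adj_def layer_def V_def)

lemma layer_subset_V: "i \<in> {1..n} \<Longrightarrow> layer n i \<subseteq> V n"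
  unfolding layer_def V_def by auto

lemma finite_V: "finite (V n)"
  unfolding V_def by auto

lemma layer_eq_image: "layer n i = Pair i ` {1..n}"
  unfolding layer_def by auto

lemma finite_layer: "finite (layer n i)"
  by (simp add: layer_eq_image)

lemma card_layer: "card (layer n i) = n"
  by (simp add: layer_eq_image card_image inj_on_def)

lemma card_layer_pair:
  assumes "i \<noteq> i'"
  shows "card (layer n i \<union> layer n i') = 2 * n"
proof -
  have "layer n i \<inter> layer n i' = {}"
    using assms unfolding layer_def by auto
  then show ?thesis
    by (simp add: card_Un_disjoint finite_layer card_layer)
qed

lemma DeltaS_same_column:
  assumes "n \<ge> 3" and "S \<subseteq> V n"
    and "i \<in> {1..n}" and "i' \<in> {1..n}" and "i \<noteq> i'" and "j \<in> {1..n}"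
  shows "DeltaS n S (i, j) (i', j) =
    card ((layer n i \<union> layer n i') \<inter> S) + of_bool ((i, j) \<in> S) + of_bool ((i', j) \<in> S)"
proof -
  have finite_S: "finite S"
    using assms(2) finite_V finite_subset by blast
  have in_V: "(i, j) \<in> V n" "(i', j) \<in> V n"
    using assms(3,4,6) by (auto simp: V_def)
  define L where "L = layer n i \<union> layer n i'"
  have "DeltaS n S (i, j) (i', j) =
      (\<Sum>z\<in>S. of_bool (z \<in> L) + of_bool (z = (i, j)) + of_bool (z = (i', j)))"
    unfolding DeltaS_def L_def
    using Delta_same_column[OF assms(1) in_V assms(5)] assms(2) by (intro sum.cong) auto
  also have "\<dots> = card (L \<inter> S) + of_bool ((i, j) \<in> S) + of_bool ((i', j) \<in> S)"
    using finite_S by (simp add: sum.distrib Int_commute)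
  finally show ?thesis
    unfolding L_def .
qed

lemma weak_resolving_card_layer_pair_diff:
  assumes "n \<ge> 3" and "weak_k_resolving n k S"
    and "i \<in> {1..n}" and "i' \<in> {1..n}" and "i \<noteq> i'" and "j \<in> {1..n}"
  shows "card ((layer n i \<union> layer n i') \<inter> (V n - S)) + k
    \<le> 2 * n + of_bool ((i, j) \<in> S) + of_bool ((i', j) \<in> S)"
proof -
  define L where "L = layer n i \<union> layer n i'"
  have S_V: "S \<subseteq> V n"
    using assms(2) by (simp add: weak_k_resolving_def)
  have "L \<subseteq> V n"
    unfolding L_def using layer_subset_V assms(3,4) by blast
  then have "L \<inter> (V n - S) = L - S"
    by blast
  then have "card (L \<inter> (V n - S)) + card (L \<inter> S) = card L"
    using card_Int_Diff[of L S] by (simp add: L_def finite_layer)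
  also have "card L = 2 * n"
    unfolding L_def using card_layer_pair assms(5) .
  finally have split: "card (L \<inter> (V n - S)) + card (L \<inter> S) = 2 * n" .
  have "(i, j) \<in> V n" "(i', j) \<in> V n" "(i, j) \<noteq> (i', j)"
    using assms(3-6) by (auto simp: V_def)
  then have "k \<le> DeltaS n S (i, j) (i', j)"
    using assms(2) by (simp add: weak_k_resolving_def)
  then show ?thesis
    using DeltaS_same_column[OF assms(1) S_V assms(3-6)] split unfolding L_def by linarith
qed

theorem mainTheorem10:
  fixes n t :: nat and S :: "(nat \<times> nat) set"
  assumes "n \<ge> 4" and "t \<in> {1..n-1}"
    and "weak_k_resolving n (2*n - 2*t - 1) S"
    and "i \<in> {1..n}" and "i' \<in> {1..n}" and "i \<noteq> i'"
  shows "((\<exists>j\<in>{1..n}. (i, j) \<in> V n - S \<and> (i', j) \<in> V n - S) \<longrightarrow>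
            card ((layer n i \<union> layer n i') \<inter> (V n - S)) \<le> 2*t + 1)
       \<and> (\<not> (\<exists>j\<in>{1..n}. (i, j) \<in> V n - S \<and> (i', j) \<in> V n - S) \<longrightarrow>
            card ((layer n i \<union> layer n i') \<inter> (V n - S)) \<le> 2*t + 2)"
proof -
  have n3: "n \<ge> 3" using assms(1) by simp
  note bound = weak_resolving_card_layer_pair_diff[OF n3 assms(3-6)]
  have uncovered_column: "card ((layer n i \<union> layer n i') \<inter> (V n - S)) \<le> 2*t + 1"
    if "j \<in> {1..n}" "(i, j) \<notin> S" "(i', j) \<notin> S" for j
    using bound[OF that(1)] that(2,3) assms(2) by simp
  have "card ((layer n i \<union> layer n i') \<inter> (V n - S)) \<le> 2*t + 2"
  proof (cases "(layer n i \<union> layer n i') \<inter> (V n - S) = {}")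
    case False
    then obtain a b where "a = i \<or> a = i'" "b \<in> {1..n}" "(a, b) \<notin> S"
      by (auto simp: layer_def)
    then have "of_bool ((i, b) \<in> S) + of_bool ((i', b) \<in> S) \<le> (1::nat)"
      by auto
    then show ?thesis
      using bound[OF \<open>b \<in> {1..n}\<close>] assms(2) by simp
  qed simp
  then show ?thesis
    using uncovered_column by blast
qed

end
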